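(* On $\mathbb{R}^4$ with coordinates $(x_0,x_1,x_2,x_3)$ consider the Poisson bivector $$\pi=x_1(\partial_0\wedge\partial_1+\partial_2\wedge\partial_3)+x_3(\partial_0\wedge\partial_3+\partial_1\wedge\partial_2),$$ and the Lichnerowicz–Poisson complex of multivector fields with formal power series coefficients in $\mathbb{R}[[x_0,x_1,x_2,x_3]]$, with differential $\mathrm{d}_\pi=[\pi,\cdot]_{\rm SN}$. Its cohomology is $H^0_{\rm formal}=\mathbb{R}\langle1\rangle$, $H^1_{\rm formal}=\mathbb{R}^2=\langle[\partial_0],[\partial_2]\rangle$, $H^2_{\rm formal}=\mathbb{R}=\langle[\partial_0\wedge\partial_2]\rangle$, $H^3_{\rm formal}=0$, $H^4_{\rm formal}=0$. Moreover $[\partial_0]$ is (up to the factor $2$) the modular class of $\pi$ with respect to $\mathrm{d}x_0\wedge\mathrm{d}x_1\wedge\mathrm{d}x_2\wedge\mathrm{d}x_3$, and $\partial_2$ is a non-vanishing vector field along the line bundle direction $L^1$ (the $x_2$-axis).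
   Context: $\partial_i=\partial/\partial x_i$, and $[\cdot,\cdot]_{\rm SN}$ is the Schouten–Nijenhuis bracket. This bivector is the local model of the Poisson structure induced by a near-symplectic form on a 4-manifold near its singular circle, with $x_0$ the circle direction, $x_2$ the fibre coordinate of the line subbundle $L^1$ and $(x_1,x_3)$ those of the plane subbundle of the normal bundle. For an oriented Poisson manifold with volume form $\Omega$, the modular vector field $Y^\Omega$ is defined by $\mathcal{L}_{X_f}\Omega=(Y^\Omega f)\Omega$ with $X_f=\pi^\sharp(\mathrm{d}f)$. *)

theory Defs
  imports Complex_Main "HOL-Library.Numeral_Type"
begin

text \<open>Coordinates x0,x1,x2,x3 are indexed by the 4-element type 4 (0 < 1 < 2 < 3).
A formal power series in R[[x0,x1,x2,x3]] is its coefficient function on exponent vectors.\<close>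

type_synonym fps4 = "(4 \<Rightarrow> nat) \<Rightarrow> real"

text \<open>A multivector field: coefficient of the increasingly ordered wedge d_I of the
coordinate vector fields d_i, i in I (so a k-vector field is supported on sets of card k).\<close>

type_synonym mv = "4 set \<Rightarrow> fps4"

definition fmul :: "fps4 \<Rightarrow> fps4 \<Rightarrow> fps4" where
  "fmul f g m = (\<Sum>k\<in>{k. \<forall>i. k i \<le> m i}. f k * g (\<lambda>i. m i - k i))"

definition fpd :: "4 \<Rightarrow> fps4 \<Rightarrow> fps4" where
  "fpd i f m = real (m i + 1) * f (m(i := m i + 1))"

definition fconst :: "real \<Rightarrow> fps4" where
  "fconst c m = (if m = (\<lambda>_. 0) then c else 0)"

definition fvar :: "4 \<Rightarrow> fps4" where
  "fvar i m = (if m = (\<lambda>j. if j = i then 1 else 0) then 1 else 0)"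

definition mvzero :: mv where "mvzero = (\<lambda>_ _. 0)"

definition mvadd :: "mv \<Rightarrow> mv \<Rightarrow> mv" where
  "mvadd A B = (\<lambda>I m. A I m + B I m)"

definition mvscale :: "real \<Rightarrow> mv \<Rightarrow> mv" where
  "mvscale c A = (\<lambda>I m. c * A I m)"

definition ebasis :: "4 set \<Rightarrow> mv" where
  "ebasis I = (\<lambda>J. if J = I then fconst 1 else (\<lambda>_. 0))"

definition fn0 :: "fps4 \<Rightarrow> mv" where
  "fn0 f = (\<lambda>J. if J = {} then f else (\<lambda>_. 0))"

definition is_kvec :: "nat \<Rightarrow> mv \<Rightarrow> bool" where
  "is_kvec k A \<longleftrightarrow> (\<forall>I. card I \<noteq> k \<longrightarrow> A I = (\<lambda>_. 0))"

definition wedge :: "mv \<Rightarrow> mv \<Rightarrow> mv" where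
  "wedge A B K m = (\<Sum>p\<in>{(I, J). I \<union> J = K \<and> I \<inter> J = {}}.
      (-1) ^ card {(i, j). i \<in> fst p \<and> j \<in> snd p \<and> j < i} * fmul (A (fst p)) (B (snd p)) m)"

text \<open>Partial derivative in x_i (coefficientwise), and left / right derivatives in the odd
variable xi_i (= d_i) of the supermanifold description of multivector fields.\<close>
definition dx :: "4 \<Rightarrow> mv \<Rightarrow> mv" where
  "dx i A = (\<lambda>I. fpd i (A I))"

definition ldxi :: "4 \<Rightarrow> mv \<Rightarrow> mv" where
  "ldxi i A = (\<lambda>I m. if i \<in> I then 0
                      else (-1) ^ card {j \<in> I. j < i} * A (insert i I) m)"

definition rdxi :: "4 \<Rightarrow> mv \<Rightarrow> mv" where
  "rdxi i A = (\<lambda>I m. if i \<in> I then 0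
                      else (-1) ^ card {j \<in> I. i < j} * A (insert i I) m)"

text \<open>Schouten--Nijenhuis bracket (odd Poisson bracket on T*[1]R^4):
  [P,Q] = sum_i (P <-d/dxi_i)(d_{x_i} Q) - (d_{x_i} P)(d/dxi_i-> Q).
  On vector fields it is the Lie bracket.\<close>
definition schouten :: "mv \<Rightarrow> mv \<Rightarrow> mv" where
  "schouten P Q = (\<lambda>I m. \<Sum>i\<in>UNIV.
      wedge (rdxi i P) (dx i Q) I m - wedge (dx i P) (ldxi i Q) I m)"

definition piNS :: mv where
  "piNS I = (if I = {0, 1} \<or> I = {2, 3} then fvar 1
             else if I = {0, 3} \<or> I = {1, 2} then fvar 3 else (\<lambda>_. 0))"

definition dpi :: "mv \<Rightarrow> mv" where
  "dpi A = schouten piNS A"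

text \<open>Components pi^{ij} of a bivector, Hamiltonian vector field X_f = pi#(df)
  (X_f^j = sum_i pi^{ij} d_i f), divergence w.r.t. dx0\<and>dx1\<and>dx2\<and>dx3
  (L_X Omega = (div X) Omega), and action of a vector field on a function.\<close>
definition bicomp :: "mv \<Rightarrow> 4 \<Rightarrow> 4 \<Rightarrow> fps4" where
  "bicomp P i j = (if i < j then P {i, j} else if j < i then (\<lambda>m. - P {i, j} m) else (\<lambda>_. 0))"

definition hamvf :: "mv \<Rightarrow> fps4 \<Rightarrow> mv" where
  "hamvf P f = (\<lambda>J m. if card J = 1
       then (\<Sum>i\<in>UNIV. fmul (bicomp P i (the_elem J)) (fpd i f) m) else 0)"

definition fdiv :: "mv \<Rightarrow> fps4" where
  "fdiv X = (\<lambda>m. \<Sum>i\<in>UNIV. fpd i (X {i}) m)"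

definition vapply :: "mv \<Rightarrow> fps4 \<Rightarrow> fps4" where
  "vapply X f = (\<lambda>m. \<Sum>i\<in>UNIV. fmul (X {i}) (fpd i f) m)"

end

theory Submission
  imports Defs "HOL-Library.Function_Algebras" "HOL-Library.FuncSet"
begin

text \<open>Multivector fields are formal power series in the even variables x_i and the odd variables
  \<xi>_i = \<partial>_i. Multiplication by x_i and \<xi>_i together with \<partial>/\<partial>x_i and \<partial>/\<partial>\<xi>_i satisfy the
  canonical (anti)commutation relations, and d_\<pi> is a quadratic expression in these operators.
  In this algebra there is an explicit operator h with d_\<pi> h + h d_\<pi> = 2E, E the Euler operator
  x_i \<partial>/\<partial>x_i, so a cocycle is cohomologous to its constant-coefficient part. On constant
  coefficients d_\<pi> = -(\<xi>_0\<xi>_1 + \<xi>_2\<xi>_3) \<partial>/\<partial>\<xi>_1 - (\<xi>_0\<xi>_3 + \<xi>_1\<xi>_2) \<partial>/\<partial>\<xi>_3, and a second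
  operator h_0 gives d_\<pi> h_0 + h_0 d_\<pi> = -2N, N the projection onto the components involving
  \<partial>_1 or \<partial>_3. Hence every cocycle is cohomologous to a constant field in \<partial>_0, \<partial>_2 alone, and
  none of those is exact because coboundaries vanish at the origin on such components.\<close>

lemma less_4: "(0::4) < 1" "(1::4) < 2" "(2::4) < 3" "(0::4) < 2" "(0::4) < 3" "(1::4) < 3"
  by (simp_all add: less_bit0_def bit0.Rep_0 bit0.Rep_1 bit0.Rep_numeral)

lemma not_less_4:
  "\<not> (1::4) < 0" "\<not> (2::4) < 0" "\<not> (3::4) < 0" "\<not> (2::4) < 1" "\<not> (3::4) < 1" "\<not> (3::4) < 2"
  by (simp_all add: less_bit0_def bit0.Rep_0 bit0.Rep_1 bit0.Rep_numeral)

lemma distinct_4: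
  "(0::4) \<noteq> 1" "(0::4) \<noteq> 2" "(0::4) \<noteq> 3" "(1::4) \<noteq> 2" "(1::4) \<noteq> 3" "(2::4) \<noteq> 3"
  "(1::4) \<noteq> 0" "(2::4) \<noteq> 0" "(3::4) \<noteq> 0" "(2::4) \<noteq> 1" "(3::4) \<noteq> 1" "(3::4) \<noteq> 2"
  by simp_all

lemma exhaust_4: "(x::4) = 0 \<or> x = 1 \<or> x = 2 \<or> x = 3"
proof -
  have "Rep_bit0 x < 4" "0 \<le> Rep_bit0 x"
    using bit0.Rep_less_n[of x] type_definition.Rep[OF type_definition_bit0, of x] by simp_all
  then have "Rep_bit0 x \<in> {0, 1, 2, 3}" by auto
  then show ?thesis
    by (auto simp: bit0.Rep_inject_sym bit0.Rep_0 bit0.Rep_1 bit0.Rep_numeral)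
qed

lemma UNIV_4: "(UNIV::4 set) = {0, 1, 2, 3}"
  using exhaust_4 by auto

lemma sum_UNIV_4: "(\<Sum>i\<in>(UNIV::4 set). f i) = f 0 + f 1 + f 2 + f 3"
proof -
  have "(\<Sum>i\<in>(UNIV::4 set). f i) = (\<Sum>i\<in>{0, 1, 2, 3}. f i)"
    by (simp only: UNIV_4)
  also have "\<dots> = f 0 + (f 1 + (f 2 + f 3))"
    by (simp add: distinct_4)
  finally show ?thesis by (simp add: add.assoc)
qed

lemma set_4_eq_iff:
  "(A::4 set) = B \<longleftrightarrow> (0 \<in> A \<longleftrightarrow> 0 \<in> B) \<and> (1 \<in> A \<longleftrightarrow> 1 \<in> B) \<and> (2 \<in> A \<longleftrightarrow> 2 \<in> B) \<and> (3 \<in> A \<longleftrightarrow> 3 \<in> B)"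
proof
  assume memb: "(0 \<in> A \<longleftrightarrow> 0 \<in> B) \<and> (1 \<in> A \<longleftrightarrow> 1 \<in> B) \<and> (2 \<in> A \<longleftrightarrow> 2 \<in> B) \<and> (3 \<in> A \<longleftrightarrow> 3 \<in> B)"
  show "A = B"
  proof (rule set_eqI)
    fix x show "x \<in> A \<longleftrightarrow> x \<in> B" using exhaust_4[of x] memb by auto
  qed
qed simp

lemma finite_multiindices_below: "finite {k::4 \<Rightarrow> nat. \<forall>j. k j \<le> m j}"
proof -
  have "{k::4 \<Rightarrow> nat. \<forall>j. k j \<le> m j} = Pi\<^sub>E UNIV (\<lambda>j. {..m j})"
    by (auto simp: PiE_UNIV_domain Pi_def)
  then show ?thesis by (simp add: finite_PiE)
qed

definition fxmul :: "4 \<Rightarrow> fps4 \<Rightarrow> fps4" where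
  "fxmul i g = (\<lambda>m. if m i = 0 then 0 else g (m(i := m i - 1)))"

lemma fmul_fvar: "fmul (fvar i) g = fxmul i g"
proof
  fix m
  let ?S = "{k::4 \<Rightarrow> nat. \<forall>j. k j \<le> m j}"
  let ?e = "\<lambda>j. if j = i then 1 else (0::nat)"
  have "fmul (fvar i) g m = (\<Sum>k\<in>?S. if k = ?e then g (\<lambda>j. m j - k j) else 0)"
    unfolding fmul_def fvar_def by (rule sum.cong) auto
  also have "\<dots> = (if ?e \<in> ?S then g (\<lambda>j. m j - ?e j) else 0)"
    using finite_multiindices_below[of m] by (simp add: sum.delta)
  also have "\<dots> = fxmul i g m"
    by (auto simp: fxmul_def fun_upd_def intro!: arg_cong[where f = g])
  finally show "fmul (fvar i) g m = fxmul i g m" .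
qed

lemma fmul_fconst: "fmul (fconst c) g m = c * g m"
proof -
  let ?S = "{k::4 \<Rightarrow> nat. \<forall>j. k j \<le> m j}"
  have "fmul (fconst c) g m = (\<Sum>k\<in>?S. if k = (\<lambda>_. 0) then c * g (\<lambda>j. m j - k j) else 0)"
    unfolding fmul_def fconst_def by (rule sum.cong) auto
  also have "\<dots> = c * g m"
    using finite_multiindices_below[of m] by (simp add: sum.delta)
  finally show ?thesis .
qed

lemma fmul_zero_left: "fmul (\<lambda>_. 0) g m = 0"
  by (simp add: fmul_def)

lemma fmul_add_left: "fmul (f + h) g m = fmul f g m + fmul h g m"
  by (simp add: fmul_def algebra_simps sum.distrib)

lemma fmul_uminus_left: "fmul (\<lambda>k. - f k) g m = - fmul f g m"
  by (simp add: fmul_def sum_negf)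

lemma fmul_scale_left: "fmul (\<lambda>k. c * f k) g m = c * fmul f g m"
  by (simp add: fmul_def sum_distrib_left algebra_simps)

lemma fpd_linear:
  "fpd i (g + h) = fpd i g + fpd i h" "fpd i (g - h) = fpd i g - fpd i h"
  "fpd i (- g) = - fpd i g" "fpd i 0 = 0"
  by (auto simp: fun_eq_iff fpd_def algebra_simps)

lemma fxmul_linear:
  "fxmul i (g + h) = fxmul i g + fxmul i h" "fxmul i (g - h) = fxmul i g - fxmul i h"
  "fxmul i (- g) = - fxmul i g" "fxmul i 0 = 0"
  by (auto simp: fun_eq_iff fxmul_def)

lemma fpd_commute: "fpd i (fpd j g) = fpd j (fpd i g)"
  by (auto simp: fun_eq_iff fpd_def fun_upd_twist)

lemma fpd_fxmul: "fpd i (fxmul j g) = fxmul j (fpd i g) + (if i = j then g else 0)"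
proof (cases "i = j")
  case True
  then show ?thesis by (auto simp: fun_eq_iff fxmul_def fpd_def of_nat_diff algebra_simps)
next
  case False
  then show ?thesis by (auto simp: fun_eq_iff fxmul_def fpd_def fun_upd_twist)
qed

lemma fpd_fvar: "fpd i (fvar j) = (if i = j then fconst 1 else (\<lambda>_. 0))"
proof
  fix m :: "4 \<Rightarrow> nat"
  have "m(i := m i + 1) = (\<lambda>k. if k = j then 1 else 0) \<longleftrightarrow> i = j \<and> m = (\<lambda>_. 0)"
  proof
    assume upd: "m(i := m i + 1) = (\<lambda>k. if k = j then 1 else 0)"
    have "m i + 1 = (if i = j then 1 else 0)"
      using fun_cong[OF upd, of i] by simp
    then have "i = j" by (auto split: if_splits)
    moreover have "m k = 0" for k using fun_cong[OF upd, of k] \<open>i = j\<close> by (cases "k = i") auto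
    ultimately show "i = j \<and> m = (\<lambda>_. 0)" by auto
  qed (auto simp: fun_eq_iff)
  then show "fpd i (fvar j) m = (if i = j then fconst 1 else (\<lambda>_. 0)) m"
    by (auto simp: fpd_def fvar_def fconst_def)
qed

lemma fpd_zero: "fpd i (\<lambda>_. 0) = (\<lambda>_. 0)"
  by (simp add: fun_eq_iff fpd_def)

section \<open>Weyl--Clifford operators on multivector fields\<close>

definition xmul :: "4 \<Rightarrow> mv \<Rightarrow> mv" where
  "xmul i A = (\<lambda>I. fxmul i (A I))"

definition num_below :: "4 set \<Rightarrow> 4 \<Rightarrow> nat" where
  "num_below I i = card {j\<in>I. j < i}"

text \<open>Left multiplication by the odd variable \<xi>_i, which stands for \<partial>_i.\<close>
definition ximul :: "4 \<Rightarrow> mv \<Rightarrow> mv" where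
  "ximul i A = (\<lambda>I m. if i \<in> I then (-1) ^ num_below I i * A (I - {i}) m else 0)"

lemma ldxi_eq: "ldxi i A = (\<lambda>I m. if i \<in> I then 0 else (-1) ^ num_below I i * A (insert i I) m)"
  unfolding ldxi_def num_below_def ..

lemma num_below_insert:
  fixes I :: "4 set"
  assumes "a \<notin> I"
  shows "num_below (insert a I) i = num_below I i + (if a < i then 1 else 0)"
proof (cases "a < i")
  case True
  then have "{j \<in> insert a I. j < i} = insert a {j\<in>I. j < i}" by auto
  with True assms show ?thesis by (simp add: num_below_def)
next
  case False
  then have "{j \<in> insert a I. j < i} = {j\<in>I. j < i}" by auto
  with False show ?thesis by (simp add: num_below_def)
qed

lemma num_below_remove:
  fixes I :: "4 set"
  assumes "a \<in> I"
  shows "num_below I i = num_below (I - {a}) i + (if a < i then 1 else 0)"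
  using num_below_insert[of a "I - {a}" i] assms by (simp add: insert_absorb)

lemma num_below_self: "num_below (I - {i}) i = num_below I i" "num_below (insert i I) i = num_below I i"
  unfolding num_below_def by (rule arg_cong[where f = card], auto)+

lemma neg_one_power_mult_cancel: "(-1::real) ^ n * ((-1) ^ n * x) = x"
  by (induction n) auto

lemma xmul_linear:
  "xmul i (A + B) = xmul i A + xmul i B" "xmul i (A - B) = xmul i A - xmul i B"
  "xmul i (- A) = - xmul i A" "xmul i 0 = 0"
  by (auto simp: fun_eq_iff xmul_def fxmul_def)

lemma ximul_linear:
  "ximul i (A + B) = ximul i A + ximul i B" "ximul i (A - B) = ximul i A - ximul i B"
  "ximul i (- A) = - ximul i A" "ximul i 0 = 0"
  by (auto simp: fun_eq_iff ximul_def algebra_simps)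

lemma dx_linear:
  "dx i (A + B) = dx i A + dx i B" "dx i (A - B) = dx i A - dx i B"
  "dx i (- A) = - dx i A" "dx i 0 = 0"
  by (auto simp: fun_eq_iff dx_def fpd_def algebra_simps)

lemma ldxi_linear:
  "ldxi i (A + B) = ldxi i A + ldxi i B" "ldxi i (A - B) = ldxi i A - ldxi i B"
  "ldxi i (- A) = - ldxi i A" "ldxi i 0 = 0"
  by (auto simp: fun_eq_iff ldxi_def algebra_simps)

lemma operators_numeral:
  "xmul i (numeral n * A) = numeral n * xmul i A" "ximul i (numeral n * A) = numeral n * ximul i A"
  "dx i (numeral n * A) = numeral n * dx i A" "ldxi i (numeral n * A) = numeral n * ldxi i A"
  "xmul i (A * numeral n) = xmul i A * numeral n" "ximul i (A * numeral n) = ximul i A * numeral n"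
  "dx i (A * numeral n) = dx i A * numeral n" "ldxi i (A * numeral n) = ldxi i A * numeral n"
  by (auto simp: fun_eq_iff xmul_def fxmul_def ximul_def dx_def fpd_def ldxi_def algebra_simps)

lemma xmul_commute: "xmul i (xmul j A) = xmul j (xmul i A)"
  by (auto simp: fun_eq_iff xmul_def fxmul_def fun_upd_twist)

lemma dx_commute: "dx i (dx j A) = dx j (dx i A)"
  by (simp add: fun_eq_iff dx_def fpd_commute)

lemma dx_xmul: "dx i (xmul j A) = xmul j (dx i A) + (if i = j then A else 0)"
  by (simp add: fun_eq_iff dx_def xmul_def fpd_fxmul)

lemma ximul_xmul: "ximul i (xmul j A) = xmul j (ximul i A)"
  by (auto simp: fun_eq_iff xmul_def fxmul_def ximul_def)

lemma dx_ximul: "dx i (ximul j A) = ximul j (dx i A)"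
  by (auto simp: fun_eq_iff dx_def fpd_def ximul_def)

lemma ldxi_xmul: "ldxi i (xmul j A) = xmul j (ldxi i A)"
  by (auto simp: fun_eq_iff xmul_def fxmul_def ldxi_def)

lemma ldxi_dx: "ldxi i (dx j A) = dx j (ldxi i A)"
  by (auto simp: fun_eq_iff dx_def fpd_def ldxi_def)

lemma ximul_ximul_same: "ximul i (ximul i A) = 0"
  by (auto simp: fun_eq_iff ximul_def)

lemma ldxi_ldxi_same: "ldxi i (ldxi i A) = 0"
  by (auto simp: fun_eq_iff ldxi_def)

lemma ximul_anticommute:
  assumes "i \<noteq> j"
  shows "ximul i (ximul j A) = - ximul j (ximul i A)"
proof (intro ext)
  fix I m
  show "ximul i (ximul j A) I m = (- ximul j (ximul i A)) I m"
  proof (cases "i \<in> I \<and> j \<in> I")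
    case True
    have below: "num_below I i = num_below (I - {j}) i + (if j < i then 1 else 0)"
        "num_below I j = num_below (I - {i}) j + (if i < j then 1 else 0)"
      using True num_below_remove by blast+
    have "I - {j} - {i} = I - {i} - {j}" by auto
    then have lhs: "ximul i (ximul j A) I m
          = (-1) ^ num_below I i * ((-1) ^ num_below (I - {i}) j * A (I - {i} - {j}) m)"
      and rhs: "ximul j (ximul i A) I m
          = (-1) ^ num_below I j * ((-1) ^ num_below (I - {j}) i * A (I - {i} - {j}) m)"
      using True assms by (simp_all add: ximul_def)
    show ?thesis
    proof (cases "i < j")
      case True
      then have "\<not> j < i" by simp
      with True show ?thesis by (simp add: lhs rhs below)
    next
      case False
      with assms have "j < i" by simp
      with False show ?thesis by (simp add: lhs rhs below)
    qed
  next
    case False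
    with assms show ?thesis by (auto simp: ximul_def)
  qed
qed

lemma ldxi_anticommute:
  assumes "i \<noteq> j"
  shows "ldxi i (ldxi j A) = - ldxi j (ldxi i A)"
proof (intro ext)
  fix I m
  show "ldxi i (ldxi j A) I m = (- ldxi j (ldxi i A)) I m"
  proof (cases "i \<notin> I \<and> j \<notin> I")
    case True
    have below: "num_below (insert i I) j = num_below I j + (if i < j then 1 else 0)"
        "num_below (insert j I) i = num_below I i + (if j < i then 1 else 0)"
      using True num_below_insert by blast+
    have "insert i (insert j I) = insert j (insert i I)" by auto
    then have lhs: "ldxi i (ldxi j A) I m
          = (-1) ^ num_below I i * ((-1) ^ num_below (insert i I) j * A (insert j (insert i I)) m)"
      and rhs: "ldxi j (ldxi i A) I m
          = (-1) ^ num_below I j * ((-1) ^ num_below (insert j I) i * A (insert j (insert i I)) m)"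
      using True assms by (simp_all add: ldxi_eq)
    show ?thesis
    proof (cases "i < j")
      case True
      then have "\<not> j < i" by simp
      with True show ?thesis by (simp add: lhs rhs below)
    next
      case False
      with assms have "j < i" by simp
      with False show ?thesis by (simp add: lhs rhs below)
    qed
  next
    case False
    with assms show ?thesis by (auto simp: ldxi_eq)
  qed
qed

lemma ximul_ldxi_same_apply: "ximul i (ldxi i A) I m = (if i \<in> I then A I m else 0)"
  by (simp add: ximul_def ldxi_eq num_below_self insert_absorb neg_one_power_mult_cancel)

lemma ldxi_ximul_same_apply: "ldxi i (ximul i A) I m = (if i \<in> I then 0 else A I m)"
proof (cases "i \<in> I")
  case False
  then have "insert i I - {i} = I" by auto
  with False show ?thesis
    by (simp add: ldxi_eq ximul_def num_below_self(2) neg_one_power_mult_cancel)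
qed (simp add: ldxi_eq)

lemma ldxi_ximul_distinct:
  assumes "i \<noteq> j"
  shows "ldxi i (ximul j A) = - ximul j (ldxi i A)"
proof (intro ext)
  fix I m
  show "ldxi i (ximul j A) I m = (- ximul j (ldxi i A)) I m"
  proof (cases "i \<notin> I \<and> j \<in> I")
    case True
    have below: "num_below (insert i I) j = num_below I j + (if i < j then 1 else 0)"
        "num_below I i = num_below (I - {j}) i + (if j < i then 1 else 0)"
      using True by (simp_all add: num_below_insert num_below_remove[of j I i])
    have "insert i I - {j} = insert i (I - {j})" using assms by auto
    then have lhs: "ldxi i (ximul j A) I m
        = (-1) ^ num_below I i * ((-1) ^ num_below (insert i I) j * A (insert i (I - {j})) m)"
      and rhs: "ximul j (ldxi i A) I m
        = (-1) ^ num_below I j * ((-1) ^ num_below (I - {j}) i * A (insert i (I - {j})) m)"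
      using True by (simp_all add: ldxi_eq ximul_def)
    show ?thesis
    proof (cases "i < j")
      case True
      then have "\<not> j < i" by simp
      with True show ?thesis by (simp add: lhs rhs below)
    next
      case False
      with assms have "j < i" by simp
      with False show ?thesis by (simp add: lhs rhs below)
    qed
  next
    case False
    show ?thesis
    proof (cases "i \<in> I")
      case True
      then have "ldxi i (ximul j A) I m = 0" and "ximul j (ldxi i A) I m = 0"
        using assms by (simp_all add: ldxi_eq ximul_def)
      then show ?thesis by simp
    next
      case not_i: False
      with False assms show ?thesis by (simp add: ldxi_eq ximul_def)
    qed
  qed
qed

lemma ldxi_ximul: "ldxi i (ximul j A) = (if i = j then A else 0) - ximul j (ldxi i A)"
proof (cases "i = j")
  case True
  then show ?thesis by (simp add: fun_eq_iff ldxi_ximul_same_apply ximul_ldxi_same_apply)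
qed (simp add: ldxi_ximul_distinct)

text \<open>Oriented for normal ordering: multiplications by x outermost, then by \<xi>, then
  derivatives in x, then in \<xi>; operators of the same kind are sorted by index.\<close>
lemmas weyl_clifford_relations =
  xmul_linear ximul_linear dx_linear ldxi_linear operators_numeral
  xmul_commute[of 1 0] xmul_commute[of 2 0] xmul_commute[of 3 0]
  xmul_commute[of 2 1] xmul_commute[of 3 1] xmul_commute[of 3 2]
  dx_commute[of 1 0] dx_commute[of 2 0] dx_commute[of 3 0]
  dx_commute[of 2 1] dx_commute[of 3 1] dx_commute[of 3 2]
  ximul_anticommute[of 1 0] ximul_anticommute[of 2 0] ximul_anticommute[of 3 0]
  ximul_anticommute[of 2 1] ximul_anticommute[of 3 1] ximul_anticommute[of 3 2]
  ldxi_anticommute[of 1 0] ldxi_anticommute[of 2 0] ldxi_anticommute[of 3 0]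
  ldxi_anticommute[of 2 1] ldxi_anticommute[of 3 1] ldxi_anticommute[of 3 2]
  ximul_ximul_same ldxi_ldxi_same dx_xmul ximul_xmul dx_ximul ldxi_xmul ldxi_dx ldxi_ximul
  distinct_4

section \<open>Normal form of the differential\<close>

definition mv_single :: "4 set \<Rightarrow> fps4 \<Rightarrow> mv" where
  "mv_single S g = (\<lambda>J. if J = S then g else (\<lambda>_. 0))"

definition fmul_mv :: "fps4 \<Rightarrow> mv \<Rightarrow> mv" where
  "fmul_mv g B = (\<lambda>J m. fmul g (B J) m)"

lemma fmul_mv_fvar: "fmul_mv (fvar i) B = xmul i B"
  by (simp add: fun_eq_iff fmul_mv_def xmul_def fmul_fvar)

lemma fmul_mv_uminus: "fmul_mv (\<lambda>k. - f k) B = - fmul_mv f B"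
  by (simp add: fun_eq_iff fmul_mv_def fmul_uminus_left)

lemma fmul_mv_one: "fmul_mv (fconst 1) B = B"
  by (simp add: fun_eq_iff fmul_mv_def fmul_fconst)

lemma wedge_add_left: "wedge (P + Q) B = wedge P B + wedge Q B"
  by (auto simp: fun_eq_iff wedge_def fmul_add_left sum.distrib algebra_simps)

lemma wedge_zero_left: "wedge 0 B = 0"
  by (auto simp: fun_eq_iff wedge_def fmul_def)

lemma wedge_mv_single:
  "wedge (mv_single S g) B K m =
    (if S \<subseteq> K then (-1) ^ card {(i, j). i \<in> S \<and> j \<in> K - S \<and> j < i} * fmul g (B (K - S)) m
     else 0)"
proof -
  let ?T = "{(I, J). I \<union> J = K \<and> I \<inter> J = ({}::4 set)}"
  let ?f = "\<lambda>p. (-1::real) ^ card {(i, j). i \<in> fst p \<and> j \<in> snd p \<and> j < i} * fmul g (B (snd p)) m"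
  have "wedge (mv_single S g) B K m = (\<Sum>p\<in>?T. if fst p = S then ?f p else 0)"
    unfolding wedge_def mv_single_def by (rule sum.cong) (auto simp: fmul_zero_left)
  also have "\<dots> = sum ?f {p\<in>?T. fst p = S}"
    by (rule sum.inter_filter[symmetric]) (rule finite_subset[of _ UNIV], auto)
  also have "{p\<in>?T. fst p = S} = (if S \<subseteq> K then {(S, K - S)} else {})"
    by auto
  finally show ?thesis by simp
qed

lemma wedge_single_1: "wedge (mv_single {i} g) B = ximul i (fmul_mv g B)"
proof (intro ext)
  fix K m
  have "{(a, b). a \<in> {i} \<and> b \<in> K - {i} \<and> b < a} = (\<lambda>b. (i, b)) ` {b\<in>K. b < i}"
    by auto
  then have "card {(a, b). a \<in> {i} \<and> b \<in> K - {i} \<and> b < a} = num_below K i"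
    by (simp add: card_image inj_on_def num_below_def)
  then show "wedge (mv_single {i} g) B K m = ximul i (fmul_mv g B) K m"
    by (simp add: wedge_mv_single ximul_def fmul_mv_def)
qed

lemma wedge_single_2:
  assumes "i < j"
  shows "wedge (mv_single {i, j} g) B = ximul i (ximul j (fmul_mv g B))"
proof (intro ext)
  fix K m
  let ?X = "{b\<in>K. b < i}" and ?Y = "{b\<in>K - {i}. b < j}"
  have "{(a, b). a \<in> {i, j} \<and> b \<in> K - {i, j} \<and> b < a} = (\<lambda>b. (i, b)) ` ?X \<union> (\<lambda>b. (j, b)) ` ?Y"
    and "(\<lambda>b. (i, b)) ` ?X \<inter> (\<lambda>b. (j, b)) ` ?Y = {}"
    using assms by auto
  then have "card {(a, b). a \<in> {i, j} \<and> b \<in> K - {i, j} \<and> b < a} = num_below K i + num_below (K - {i}) j"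
    by (simp add: card_Un_disjoint card_image inj_on_def num_below_def)
  moreover have "K - {i, j} = K - {i} - {j}" by auto
  moreover have "j \<noteq> i" using assms by simp
  ultimately show "wedge (mv_single {i, j} g) B K m = ximul i (ximul j (fmul_mv g B)) K m"
    using assms by (simp add: wedge_mv_single ximul_def fmul_mv_def power_add)
qed

lemma card_filter_singleton:
  "card {j. j = a \<and> P j} = (if P a then 1 else 0)" "card {j \<in> {a}. P j} = (if P a then 1 else 0)"
  by (simp_all add: Collect_conv_if)

lemma rdxi_piNS_0: "rdxi 0 piNS = mv_single {1} (\<lambda>k. - fvar 1 k) + mv_single {3} (\<lambda>k. - fvar 3 k)"
proof (intro ext)
  fix S m
  show "rdxi 0 piNS S m = (mv_single {1} (\<lambda>k. - fvar 1 k) + mv_single {3} (\<lambda>k. - fvar 3 k)) S m"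
  proof (cases "S = {1} \<or> S = {3}")
    case True
    then show ?thesis
      by (elim disjE) (simp_all add: rdxi_def piNS_def mv_single_def doubleton_eq_iff distinct_4
          less_4 not_less_4 card_filter_singleton)
  next
    case False
    then show ?thesis by (auto simp: rdxi_def piNS_def mv_single_def set_4_eq_iff distinct_4)
  qed
qed

lemma rdxi_piNS_1: "rdxi 1 piNS = mv_single {0} (fvar 1) + mv_single {2} (\<lambda>k. - fvar 3 k)"
proof (intro ext)
  fix S m
  show "rdxi 1 piNS S m = (mv_single {0} (fvar 1) + mv_single {2} (\<lambda>k. - fvar 3 k)) S m"
  proof (cases "S = {0} \<or> S = {2}")
    case True
    then show ?thesis
      by (elim disjE) (simp_all add: rdxi_def piNS_def mv_single_def doubleton_eq_iff distinct_4
          less_4 not_less_4 card_filter_singleton)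
  next
    case False
    then show ?thesis by (auto simp: rdxi_def piNS_def mv_single_def set_4_eq_iff distinct_4)
  qed
qed

lemma rdxi_piNS_2: "rdxi 2 piNS = mv_single {1} (fvar 3) + mv_single {3} (\<lambda>k. - fvar 1 k)"
proof (intro ext)
  fix S m
  show "rdxi 2 piNS S m = (mv_single {1} (fvar 3) + mv_single {3} (\<lambda>k. - fvar 1 k)) S m"
  proof (cases "S = {1} \<or> S = {3}")
    case True
    then show ?thesis
      by (elim disjE) (simp_all add: rdxi_def piNS_def mv_single_def doubleton_eq_iff distinct_4
          less_4 not_less_4 card_filter_singleton)
  next
    case False
    then show ?thesis by (auto simp: rdxi_def piNS_def mv_single_def set_4_eq_iff distinct_4)
  qed
qed

lemma rdxi_piNS_3: "rdxi 3 piNS = mv_single {0} (fvar 3) + mv_single {2} (fvar 1)"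
proof (intro ext)
  fix S m
  show "rdxi 3 piNS S m = (mv_single {0} (fvar 3) + mv_single {2} (fvar 1)) S m"
  proof (cases "S = {0} \<or> S = {2}")
    case True
    then show ?thesis
      by (elim disjE) (simp_all add: rdxi_def piNS_def mv_single_def doubleton_eq_iff distinct_4
          less_4 not_less_4 card_filter_singleton)
  next
    case False
    then show ?thesis by (auto simp: rdxi_def piNS_def mv_single_def set_4_eq_iff distinct_4)
  qed
qed

lemma dx_piNS:
  "dx 0 piNS = 0" "dx 2 piNS = 0"
  "dx 1 piNS = mv_single {0, 1} (fconst 1) + mv_single {2, 3} (fconst 1)"
  "dx 3 piNS = mv_single {0, 3} (fconst 1) + mv_single {1, 2} (fconst 1)"
  by (auto simp: fun_eq_iff dx_def piNS_def mv_single_def fpd_fvar fpd_zero distinct_4 doubleton_eq_iff)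

text \<open>The first eight terms come from the \<xi>-derivatives of \<pi>, the last four from
  \<partial>\<pi>/\<partial>x_1 and \<partial>\<pi>/\<partial>x_3.\<close>
lemma dpi_normal_form:
  "dpi A =
     - ximul 1 (xmul 1 (dx 0 A)) - ximul 3 (xmul 3 (dx 0 A))
     + ximul 0 (xmul 1 (dx 1 A)) - ximul 2 (xmul 3 (dx 1 A))
     - ximul 3 (xmul 1 (dx 2 A)) + ximul 1 (xmul 3 (dx 2 A))
     + ximul 2 (xmul 1 (dx 3 A)) + ximul 0 (xmul 3 (dx 3 A))
     - ximul 0 (ximul 1 (ldxi 1 A)) - ximul 2 (ximul 3 (ldxi 1 A))
     - ximul 0 (ximul 3 (ldxi 3 A)) - ximul 1 (ximul 2 (ldxi 3 A))"
proof (intro ext)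
  fix K m
  have "dpi A K m =
      (wedge (rdxi 0 piNS) (dx 0 A) K m - wedge (dx 0 piNS) (ldxi 0 A) K m)
    + (wedge (rdxi 1 piNS) (dx 1 A) K m - wedge (dx 1 piNS) (ldxi 1 A) K m)
    + (wedge (rdxi 2 piNS) (dx 2 A) K m - wedge (dx 2 piNS) (ldxi 2 A) K m)
    + (wedge (rdxi 3 piNS) (dx 3 A) K m - wedge (dx 3 piNS) (ldxi 3 A) K m)"
    by (simp only: dpi_def schouten_def sum_UNIV_4)
  also have "\<dots> =
      (- ximul 1 (xmul 1 (dx 0 A)) K m - ximul 3 (xmul 3 (dx 0 A)) K m - 0)
    + (ximul 0 (xmul 1 (dx 1 A)) K m - ximul 2 (xmul 3 (dx 1 A)) K m
        - (ximul 0 (ximul 1 (ldxi 1 A)) K m + ximul 2 (ximul 3 (ldxi 1 A)) K m))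
    + (ximul 1 (xmul 3 (dx 2 A)) K m - ximul 3 (xmul 1 (dx 2 A)) K m - 0)
    + (ximul 0 (xmul 3 (dx 3 A)) K m + ximul 2 (xmul 1 (dx 3 A)) K m
        - (ximul 0 (ximul 3 (ldxi 3 A)) K m + ximul 1 (ximul 2 (ldxi 3 A)) K m))"
    unfolding rdxi_piNS_0 rdxi_piNS_1 rdxi_piNS_2 rdxi_piNS_3 dx_piNS wedge_add_left wedge_zero_left
      plus_fun_apply wedge_single_1 wedge_single_2[OF less_4(1)] wedge_single_2[OF less_4(2)]
      wedge_single_2[OF less_4(3)] wedge_single_2[OF less_4(5)]
      fmul_mv_uminus fmul_mv_fvar fmul_mv_one ximul_linear uminus_apply zero_fun_apply
    by (simp only: diff_minus_eq_add)
  also have "\<dots> = (- ximul 1 (xmul 1 (dx 0 A)) - ximul 3 (xmul 3 (dx 0 A))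
     + ximul 0 (xmul 1 (dx 1 A)) - ximul 2 (xmul 3 (dx 1 A))
     - ximul 3 (xmul 1 (dx 2 A)) + ximul 1 (xmul 3 (dx 2 A))
     + ximul 2 (xmul 1 (dx 3 A)) + ximul 0 (xmul 3 (dx 3 A))
     - ximul 0 (ximul 1 (ldxi 1 A)) - ximul 2 (ximul 3 (ldxi 1 A))
     - ximul 0 (ximul 3 (ldxi 3 A)) - ximul 1 (ximul 2 (ldxi 3 A))) K m"
    unfolding plus_fun_apply minus_apply uminus_apply by (simp only: algebra_simps)
  finally show "dpi A K m = \<dots>" .
qed

section \<open>Contraction to constant coefficients\<close>

definition euler :: "mv \<Rightarrow> mv" where
  "euler A = xmul 0 (dx 0 A) + xmul 1 (dx 1 A) + xmul 2 (dx 2 A) + xmul 3 (dx 3 A)"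

definition homotopy :: "mv \<Rightarrow> mv" where
  "homotopy A = ldxi 0 A + ldxi 0 A
     + ximul 1 (ldxi 0 (ldxi 1 A)) + ximul 1 (ldxi 2 (ldxi 3 A))
     + ximul 3 (ldxi 0 (ldxi 3 A)) + ximul 3 (ldxi 1 (ldxi 2 A))
     - xmul 0 (dx 0 (ldxi 0 A)) - xmul 0 (dx 1 (ldxi 1 A))
     - xmul 0 (dx 2 (ldxi 2 A)) - xmul 0 (dx 3 (ldxi 3 A))
     + xmul 2 (dx 0 (ldxi 2 A)) - xmul 2 (dx 1 (ldxi 3 A))
     - xmul 2 (dx 2 (ldxi 0 A)) + xmul 2 (dx 3 (ldxi 1 A))"

lemma dpi_homotopy: "dpi (homotopy A) + homotopy (dpi A) = euler A + euler A"
  unfolding dpi_normal_form homotopy_def euler_def by (simp add: weyl_clifford_relations)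

lemma dpi_add: "dpi (A + B) = dpi A + dpi B"
  unfolding dpi_normal_form by (simp add: weyl_clifford_relations algebra_simps)

definition total_degree :: "(4 \<Rightarrow> nat) \<Rightarrow> nat" where
  "total_degree m = (\<Sum>i\<in>UNIV. m i)"

lemma total_degree_update: "total_degree (m(i := v)) + m i = total_degree m + v"
  unfolding total_degree_def
  by (simp add: sum.remove[of UNIV i] fun_upd_other sum.cong[of "UNIV - {i}" _ "m(i := v)" m])

lemma total_degree_eq_0_iff: "total_degree m = 0 \<longleftrightarrow> m = (\<lambda>_. 0)"
  by (auto simp: total_degree_def fun_eq_iff)

definition deg_scale :: "(nat \<Rightarrow> real) \<Rightarrow> mv \<Rightarrow> mv" where
  "deg_scale \<phi> A = (\<lambda>I m. \<phi> (total_degree m) * A I m)"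

lemma deg_scale_linear:
  "deg_scale \<phi> (A + B) = deg_scale \<phi> A + deg_scale \<phi> B"
  "deg_scale \<phi> (A - B) = deg_scale \<phi> A - deg_scale \<phi> B"
  "deg_scale \<phi> (- A) = - deg_scale \<phi> A" "deg_scale \<phi> 0 = 0"
  by (auto simp: fun_eq_iff deg_scale_def algebra_simps)

lemma ximul_deg_scale: "ximul i (deg_scale \<phi> A) = deg_scale \<phi> (ximul i A)"
  by (auto simp: fun_eq_iff ximul_def deg_scale_def)

lemma ldxi_deg_scale: "ldxi i (deg_scale \<phi> A) = deg_scale \<phi> (ldxi i A)"
  by (auto simp: fun_eq_iff ldxi_def deg_scale_def)

lemma xmul_dx_deg_scale: "xmul i (dx j (deg_scale \<phi> A)) = deg_scale \<phi> (xmul i (dx j A))"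
proof (intro ext)
  fix I m
  show "xmul i (dx j (deg_scale \<phi> A)) I m = deg_scale \<phi> (xmul i (dx j A)) I m"
  proof (cases "m i = 0")
    case False
    let ?m' = "m(i := m i - 1)"
    have "total_degree ?m' + m i = total_degree m + (m i - 1)"
      and "total_degree (?m'(j := ?m' j + 1)) + ?m' j = total_degree ?m' + (?m' j + 1)"
      by (rule total_degree_update)+
    with False have "total_degree (?m'(j := ?m' j + 1)) = total_degree m" by arith
    with False show ?thesis by (simp add: xmul_def fxmul_def dx_def fpd_def deg_scale_def)
  qed (simp add: xmul_def fxmul_def deg_scale_def)
qed

text \<open>The coefficients of d_\<pi> are linear, so d_\<pi> preserves the polynomial degree.\<close>
lemma dpi_deg_scale: "dpi (deg_scale \<phi> A) = deg_scale \<phi> (dpi A)"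
  unfolding dpi_normal_form
  by (simp add: ximul_deg_scale ldxi_deg_scale xmul_dx_deg_scale deg_scale_linear)

lemma euler_apply: "euler A I m = real (total_degree m) * A I m"
proof -
  have "xmul i (dx i A) I m = real (m i) * A I m" for i
    by (cases "m i = 0") (simp_all add: xmul_def fxmul_def dx_def fpd_def of_nat_diff)
  then show ?thesis
    by (simp add: euler_def total_degree_def sum_UNIV_4 algebra_simps)
qed

definition const_part :: "mv \<Rightarrow> mv" where
  "const_part = deg_scale (\<lambda>n. if n = 0 then 1 else 0)"

text \<open>Inverse of 2 times the Euler operator on positive degrees; in degree 0 it is 0 because
  division by zero yields 0.\<close>
definition twice_euler_inverse :: "mv \<Rightarrow> mv" where
  "twice_euler_inverse = deg_scale (\<lambda>n. 1 / (2 * real n))"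

lemma homotopy_zero: "homotopy 0 = 0"
  by (simp add: homotopy_def weyl_clifford_relations)

lemma cocycle_eq_const_part:
  assumes "dpi Z = 0"
  shows "Z = const_part Z + dpi (homotopy (twice_euler_inverse Z))"
proof -
  have "dpi (twice_euler_inverse Z) = 0"
    unfolding twice_euler_inverse_def dpi_deg_scale assms deg_scale_linear ..
  then have dpi_h: "dpi (homotopy (twice_euler_inverse Z)) = euler (twice_euler_inverse Z) + euler (twice_euler_inverse Z)"
    using dpi_homotopy[of "twice_euler_inverse Z"] homotopy_zero by simp
  show ?thesis
  proof (intro ext)
    fix I m
    show "Z I m = (const_part Z + dpi (homotopy (twice_euler_inverse Z))) I m"
      unfolding plus_fun_apply dpi_h euler_apply
      by (cases "total_degree m = 0") (simp_all add: const_part_def twice_euler_inverse_def deg_scale_def)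
  qed
qed

section \<open>Constant coefficients\<close>

definition is_const :: "mv \<Rightarrow> bool" where
  "is_const A \<longleftrightarrow> (\<forall>I m. m \<noteq> (\<lambda>_. 0) \<longrightarrow> A I m = 0)"

lemma dx_is_const: "is_const A \<Longrightarrow> dx i A = 0"
proof (intro ext)
  fix I and m :: "4 \<Rightarrow> nat"
  assume "is_const A"
  moreover have "m(i := m i + 1) \<noteq> (\<lambda>_. 0)"
    by (metis fun_upd_same add_is_0 zero_neq_one)
  ultimately show "dx i A I m = 0 I m" by (simp add: dx_def fpd_def is_const_def)
qed

lemma is_const_const_part: "is_const (const_part Z)"
  by (simp add: is_const_def const_part_def deg_scale_def total_degree_eq_0_iff)

lemma dpi_is_const:
  assumes "is_const A"
  shows "dpi A = - ximul 0 (ximul 1 (ldxi 1 A)) - ximul 2 (ximul 3 (ldxi 1 A))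
    - ximul 0 (ximul 3 (ldxi 3 A)) - ximul 1 (ximul 2 (ldxi 3 A))"
  unfolding dpi_normal_form using assms by (simp add: dx_is_const xmul_linear ximul_linear)

definition const_homotopy :: "mv \<Rightarrow> mv" where
  "const_homotopy A = ldxi 0 A + ldxi 0 A + ldxi 0 A
     + ximul 1 (ldxi 0 (ldxi 1 A)) + ximul 3 (ldxi 0 (ldxi 3 A))"

definition proj_13 :: "mv \<Rightarrow> mv" where
  "proj_13 A = ximul 1 (ldxi 1 A) + ximul 3 (ldxi 3 A) + ximul 1 (ximul 3 (ldxi 1 (ldxi 3 A)))"

lemma is_const_const_homotopy: "is_const A \<Longrightarrow> is_const (const_homotopy A)"
  unfolding const_homotopy_def is_const_def
  by (simp add: ldxi_def ximul_def)

lemma dpi_const_homotopy: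
  assumes "is_const A"
  shows "dpi (const_homotopy A) + const_homotopy (dpi A) = - (proj_13 A + proj_13 A)"
  using dpi_is_const[OF assms] dpi_is_const[OF is_const_const_homotopy[OF assms]]
  by (simp add: const_homotopy_def proj_13_def weyl_clifford_relations)

lemma proj_13_apply: "proj_13 A I m = (if 1 \<in> I \<or> 3 \<in> I then A I m else 0)"
proof -
  have "ximul 3 (ldxi 1 (ldxi 3 A)) = - ldxi 1 (ximul 3 (ldxi 3 A))"
    using ldxi_ximul_distinct[of 1 3 "ldxi 3 A"] by (simp add: distinct_4)
  then show ?thesis
    by (simp add: proj_13_def ximul_linear ximul_ldxi_same_apply)
qed

definition harmonic_part :: "mv \<Rightarrow> mv" where
  "harmonic_part A = (\<lambda>I m. if 1 \<in> I \<or> 3 \<in> I \<or> m \<noteq> (\<lambda>_. 0) then 0 else A I m)"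

definition primitive :: "mv \<Rightarrow> mv" where
  "primitive Z = deg_scale (\<lambda>_. - 1 / 2) (const_homotopy (const_part Z))
     + homotopy (twice_euler_inverse Z)"

theorem cocycle_decomposition:
  assumes "dpi Z = 0"
  shows "Z = harmonic_part Z + dpi (primitive Z)"
proof -
  let ?H = "deg_scale (\<lambda>_. - 1 / 2) (const_homotopy (const_part Z))"
  let ?E = "homotopy (twice_euler_inverse Z)"
  have "dpi (const_part Z) = 0"
    unfolding const_part_def dpi_deg_scale assms deg_scale_linear ..
  then have "dpi (const_homotopy (const_part Z)) = - (proj_13 (const_part Z) + proj_13 (const_part Z))"
    using dpi_const_homotopy[OF is_const_const_part, of Z]
    by (simp add: const_homotopy_def weyl_clifford_relations)
  then have "dpi ?H = proj_13 (const_part Z)"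
    unfolding dpi_deg_scale by (auto simp: fun_eq_iff deg_scale_def)
  moreover have "const_part Z = harmonic_part Z + proj_13 (const_part Z)"
    by (auto simp: fun_eq_iff harmonic_part_def proj_13_apply const_part_def deg_scale_def
        total_degree_eq_0_iff)
  moreover have "Z = const_part Z + dpi ?E"
    by (rule cocycle_eq_const_part[OF assms])
  ultimately have "Z = harmonic_part Z + dpi ?H + dpi ?E"
    by metis
  then show ?thesis
    unfolding primitive_def dpi_add by (metis add.assoc)
qed

text \<open>Each term of d_\<pi> carries a factor x_1 or x_3, or a factor \<xi>_1 or \<xi>_3 on the left.\<close>
lemma dpi_at_origin: "1 \<notin> K \<Longrightarrow> 3 \<notin> K \<Longrightarrow> dpi A K (\<lambda>_. 0) = 0"
  by (simp add: dpi_normal_form xmul_def fxmul_def ximul_def)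

lemma is_kvec_zero: "is_kvec k 0"
  by (simp add: is_kvec_def fun_eq_iff)

lemma is_kvec_add: "is_kvec k A \<Longrightarrow> is_kvec k B \<Longrightarrow> is_kvec k (A + B)"
  by (simp add: is_kvec_def fun_eq_iff)

lemma is_kvec_diff: "is_kvec k A \<Longrightarrow> is_kvec k B \<Longrightarrow> is_kvec k (A - B)"
  by (simp add: is_kvec_def fun_eq_iff)

lemma is_kvec_xmul: "is_kvec k A \<Longrightarrow> is_kvec k (xmul i A)"
  by (simp add: is_kvec_def xmul_def fxmul_def fun_eq_iff)

lemma is_kvec_dx: "is_kvec k A \<Longrightarrow> is_kvec k (dx i A)"
  by (simp add: is_kvec_def dx_def fpd_def fun_eq_iff)

lemma is_kvec_deg_scale: "is_kvec k A \<Longrightarrow> is_kvec k (deg_scale \<phi> A)"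
  by (simp add: is_kvec_def deg_scale_def fun_eq_iff)

lemma is_kvec_ximul: "is_kvec k A \<Longrightarrow> is_kvec (Suc k) (ximul i A)"
  unfolding is_kvec_def
proof (intro allI impI)
  fix I :: "4 set"
  assume A: "\<forall>I. card I \<noteq> k \<longrightarrow> A I = (\<lambda>_. 0)" and card: "card I \<noteq> Suc k"
  show "ximul i A I = (\<lambda>_. 0)"
  proof (cases "i \<in> I")
    case True
    then have "card (I - {i}) \<noteq> k"
      using card by (simp add: card_Diff_singleton) (metis Suc_pred card_gt_0_iff finite empty_iff)
    with A True show ?thesis by (auto simp: ximul_def fun_eq_iff)
  qed (simp add: ximul_def fun_eq_iff)
qed

lemma is_kvec_ldxi: "is_kvec (Suc k) A \<Longrightarrow> is_kvec k (ldxi i A)"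
  unfolding is_kvec_def
proof (intro allI impI)
  fix I :: "4 set"
  assume A: "\<forall>I. card I \<noteq> Suc k \<longrightarrow> A I = (\<lambda>_. 0)" and card: "card I \<noteq> k"
  show "ldxi i A I = (\<lambda>_. 0)"
  proof (cases "i \<in> I")
    case False
    with card have "card (insert i I) \<noteq> Suc k" by simp
    with A False show ?thesis by (auto simp: ldxi_def fun_eq_iff)
  qed (simp add: ldxi_def fun_eq_iff)
qed

lemma ldxi_is_kvec_0: "is_kvec 0 A \<Longrightarrow> ldxi i A = 0"
  by (auto simp: is_kvec_def ldxi_def fun_eq_iff)

lemma is_kvec_ximul_ldxi_ldxi: "is_kvec (Suc k) A \<Longrightarrow> is_kvec k (ximul i (ldxi j (ldxi l A)))"
proof (cases k)
  case 0
  moreover assume "is_kvec (Suc k) A"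
  ultimately show ?thesis
    using is_kvec_ldxi by (simp add: ldxi_is_kvec_0 ximul_linear ldxi_linear is_kvec_zero)
next
  case (Suc k')
  moreover assume "is_kvec (Suc k) A"
  ultimately show ?thesis by (metis is_kvec_ldxi is_kvec_ximul)
qed

lemma is_kvec_primitive: "is_kvec (Suc k) Z \<Longrightarrow> is_kvec k (primitive Z)"
  unfolding primitive_def homotopy_def const_homotopy_def const_part_def twice_euler_inverse_def
  by (intro is_kvec_add is_kvec_diff is_kvec_deg_scale is_kvec_ximul_ldxi_ldxi is_kvec_ldxi
      is_kvec_xmul is_kvec_dx)

text \<open>Every term of both homotopies starts with a derivative in an odd variable.\<close>
lemma primitive_is_kvec_0: "is_kvec 0 Z \<Longrightarrow> primitive Z = 0"
  unfolding primitive_def homotopy_def const_homotopy_def const_part_def twice_euler_inverse_def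
  by (simp add: ldxi_is_kvec_0 is_kvec_deg_scale weyl_clifford_relations deg_scale_linear)

lemma subset_doubleton_cases: "I \<subseteq> {a, b} \<Longrightarrow> I = {} \<or> I = {a} \<or> I = {b} \<or> I = {a, b}"
proof -
  assume "I \<subseteq> {a, b}"
  then have "I \<in> Pow {a, b}" by simp
  then show ?thesis by (auto simp: Pow_insert)
qed

lemma subset_02_iff: "I \<subseteq> {0, 2} \<longleftrightarrow> 1 \<notin> I \<and> 3 \<notin> (I :: 4 set)"
proof
  assume "I \<subseteq> {0, 2}"
  then show "1 \<notin> I \<and> 3 \<notin> I" using distinct_4 by auto
next
  assume "1 \<notin> I \<and> 3 \<notin> I"
  then show "I \<subseteq> {0, 2}" using exhaust_4 by auto
qed

lemma harmonic_part_apply: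
  assumes "is_kvec k Z"
  shows "harmonic_part Z I m = (if I \<subseteq> {0, 2} \<and> card I = k \<and> m = (\<lambda>_. 0) then Z I m else 0)"
  using assms by (auto simp: harmonic_part_def is_kvec_def subset_02_iff fun_eq_iff)

lemma harmonic_part_is_kvec_0:
  assumes "is_kvec 0 Z"
  shows "harmonic_part Z = fn0 (fconst (Z {} (\<lambda>_. 0)))" (is "_ = ?R")
proof (intro ext)
  fix I m
  show "harmonic_part Z I m = ?R I m"
  proof (cases "I \<subseteq> {0, 2} \<and> m = (\<lambda>_. 0)")
    case True
    then have "I = {} \<or> I = {0} \<or> I = {2} \<or> I = {0, 2}" and "m = (\<lambda>_. 0)"
      using subset_doubleton_cases by blast+
    then show ?thesis
      by (elim disjE) (simp_all add: harmonic_part_apply[OF assms] fn0_def fconst_def distinct_4)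
  next
    case False
    then show ?thesis by (auto simp: harmonic_part_apply[OF assms] fn0_def fconst_def)
  qed
qed

lemma harmonic_part_is_kvec_1:
  assumes "is_kvec 1 Z"
  shows "harmonic_part Z = mvscale (Z {0} (\<lambda>_. 0)) (ebasis {0}) + mvscale (Z {2} (\<lambda>_. 0)) (ebasis {2})"
    (is "_ = ?R")
proof (intro ext)
  fix I m
  show "harmonic_part Z I m = ?R I m"
  proof (cases "I \<subseteq> {0, 2} \<and> m = (\<lambda>_. 0)")
    case True
    then have "I = {} \<or> I = {0} \<or> I = {2} \<or> I = {0, 2}" and "m = (\<lambda>_. 0)"
      using subset_doubleton_cases by blast+
    then show ?thesis
      by (elim disjE) (simp_all add: harmonic_part_apply[OF assms] mvscale_def ebasis_def fconst_def
          distinct_4)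
  next
    case False
    then show ?thesis by (auto simp: harmonic_part_apply[OF assms] mvscale_def ebasis_def fconst_def)
  qed
qed

lemma harmonic_part_is_kvec_2:
  assumes "is_kvec 2 Z"
  shows "harmonic_part Z = mvscale (Z {0, 2} (\<lambda>_. 0)) (ebasis {0, 2})" (is "_ = ?R")
proof (intro ext)
  fix I m
  show "harmonic_part Z I m = ?R I m"
  proof (cases "I \<subseteq> {0, 2} \<and> m = (\<lambda>_. 0)")
    case True
    then have "I = {} \<or> I = {0} \<or> I = {2} \<or> I = {0, 2}" and "m = (\<lambda>_. 0)"
      using subset_doubleton_cases by blast+
    then show ?thesis
      by (elim disjE) (simp_all add: harmonic_part_apply[OF assms] mvscale_def ebasis_def fconst_def
          distinct_4)
  next
    case False
    then show ?thesis by (auto simp: harmonic_part_apply[OF assms] mvscale_def ebasis_def fconst_def)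
  qed
qed

lemma harmonic_part_is_kvec_ge_3:
  assumes "is_kvec k Z" "3 \<le> k"
  shows "harmonic_part Z = 0"
proof (intro ext)
  fix I :: "4 set" and m
  show "harmonic_part Z I m = 0 I m"
  proof (cases "I \<subseteq> {0, 2}")
    case True
    then have "card I \<le> card {0, 2::4}" by (intro card_mono) simp_all
    also have "\<dots> = 2" by (simp add: distinct_4)
    finally show ?thesis using assms by (simp add: harmonic_part_apply[OF assms(1)])
  qed (simp add: harmonic_part_apply[OF assms(1)])
qed

section \<open>Cohomology\<close>

lemma mvzero_eq_0: "mvzero = 0"
  by (simp add: mvzero_def fun_eq_iff)

lemma mvadd_eq_plus: "mvadd A B = A + B"
  by (simp add: mvadd_def fun_eq_iff)

lemma dpi_zero: "dpi 0 = 0"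
  by (simp add: dpi_normal_form weyl_clifford_relations)

lemma is_kvec_fn0: "is_kvec 0 (fn0 f)"
  by (simp add: is_kvec_def fn0_def)

lemma is_kvec_0_eq_fn0: "is_kvec 0 Y \<Longrightarrow> Y = fn0 (Y {})"
  by (auto simp: is_kvec_def fn0_def fun_eq_iff)

lemma dpi_const_eq_0:
  assumes "is_const A" and "\<And>I. 1 \<in> I \<or> 3 \<in> I \<Longrightarrow> A I = (\<lambda>_. 0)"
  shows "dpi A = 0"
proof -
  have "ldxi 1 A = 0" "ldxi 3 A = 0"
    using assms(2) by (auto simp: fun_eq_iff ldxi_def)
  then show ?thesis by (simp add: dpi_is_const[OF assms(1)] ximul_linear)
qed

lemma dpi_ebasis: "1 \<notin> S \<Longrightarrow> 3 \<notin> S \<Longrightarrow> dpi (ebasis S) = 0"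
  by (rule dpi_const_eq_0) (auto simp: is_const_def ebasis_def fconst_def)

lemma dpi_fn0_eq_0_iff: "dpi (fn0 f) = 0 \<longleftrightarrow> (\<exists>c. f = fconst c)"
proof
  assume "dpi (fn0 f) = 0"
  then have "fn0 f = harmonic_part (fn0 f)"
    using cocycle_decomposition primitive_is_kvec_0[OF is_kvec_fn0] dpi_zero by force
  also have "\<dots> = fn0 (fconst (f (\<lambda>_. 0)))"
    unfolding harmonic_part_is_kvec_0[OF is_kvec_fn0] by (simp add: fn0_def)
  finally have "fn0 f {} = fn0 (fconst (f (\<lambda>_. 0))) {}" by simp
  then have "f = fconst (f (\<lambda>_. 0))" by (simp add: fn0_def)
  then show "\<exists>c. f = fconst c" ..
next
  assume "\<exists>c. f = fconst c"
  then show "dpi (fn0 f) = 0"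
    by (auto intro!: dpi_const_eq_0 simp: is_const_def fn0_def fconst_def)
qed

lemma cocycle_1_cohomologous:
  assumes "is_kvec 1 X" "dpi X = 0"
  shows "\<exists>a b f. X = mvscale a (ebasis {0}) + mvscale b (ebasis {2}) + dpi (fn0 f)"
proof -
  have "is_kvec 0 (primitive X)"
    using is_kvec_primitive[of 0 X] assms(1) by simp
  then have "primitive X = fn0 (primitive X {})"
    by (rule is_kvec_0_eq_fn0)
  then have "X = harmonic_part X + dpi (fn0 (primitive X {}))"
    using cocycle_decomposition[OF assms(2)] by simp
  then show ?thesis
    unfolding harmonic_part_is_kvec_1[OF assms(1)] by blast
qed

lemma cocycle_2_cohomologous:
  assumes "is_kvec 2 Z" "dpi Z = 0"
  shows "\<exists>a Y. is_kvec 1 Y \<and> Z = mvscale a (ebasis {0, 2}) + dpi Y"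
proof -
  have "is_kvec 1 (primitive Z)"
    using is_kvec_primitive[of 1 Z] assms(1) by (simp add: numeral_2_eq_2)
  moreover have "Z = mvscale (Z {0, 2} (\<lambda>_. 0)) (ebasis {0, 2}) + dpi (primitive Z)"
    using cocycle_decomposition[OF assms(2)] unfolding harmonic_part_is_kvec_2[OF assms(1)] .
  ultimately show ?thesis by blast
qed

lemma cocycle_ge_3_exact:
  assumes "is_kvec k Z" "3 \<le> k" "dpi Z = 0"
  shows "\<exists>W. is_kvec (k - 1) W \<and> Z = dpi W"
proof -
  have "is_kvec (k - 1) (primitive Z)"
    using is_kvec_primitive[of "k - 1" Z] assms(1,2) by (simp add: Suc_diff_1)
  moreover have "Z = dpi (primitive Z)"
    using cocycle_decomposition[OF assms(3)] harmonic_part_is_kvec_ge_3[OF assms(1,2)] by simp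
  ultimately show ?thesis by blast
qed

lemma harmonic_1_not_exact:
  assumes "mvscale a (ebasis {0}) + mvscale b (ebasis {2}) = dpi Y"
  shows "a = 0 \<and> b = 0"
proof -
  have "a = dpi Y {0} (\<lambda>_. 0)" "b = dpi Y {2} (\<lambda>_. 0)"
    using fun_cong[OF fun_cong[OF assms, of "{0}"], of "\<lambda>_. 0"]
      fun_cong[OF fun_cong[OF assms, of "{2}"], of "\<lambda>_. 0"]
    by (simp_all add: mvscale_def ebasis_def fconst_def distinct_4)
  then show ?thesis by (simp add: dpi_at_origin distinct_4)
qed

lemma harmonic_2_not_exact:
  assumes "mvscale a (ebasis {0, 2}) = dpi Y"
  shows "a = 0"
proof -
  have "a = dpi Y {0, 2} (\<lambda>_. 0)"
    using fun_cong[OF fun_cong[OF assms, of "{0, 2}"], of "\<lambda>_. 0"]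
    by (simp add: mvscale_def ebasis_def fconst_def)
  then show ?thesis by (simp add: dpi_at_origin distinct_4)
qed

section \<open>The modular vector field\<close>

lemma piNS_components:
  "piNS {0, 1} = fvar 1" "piNS {2, 3} = fvar 1" "piNS {0, 3} = fvar 3" "piNS {1, 2} = fvar 3"
  "piNS {0, 2} = (\<lambda>_. 0)" "piNS {1, 3} = (\<lambda>_. 0)"
  by (simp_all add: piNS_def doubleton_eq_iff distinct_4)

lemma bicomp_eq:
  "bicomp P i j = (if i < j then P {i, j} else if j < i then (\<lambda>m. - P {j, i} m) else (\<lambda>_. 0))"
  by (simp add: bicomp_def insert_commute)

lemma hamvf_piNS:
  "hamvf piNS f {0} = - fxmul 1 (fpd 1 f) - fxmul 3 (fpd 3 f)"
  "hamvf piNS f {1} = fxmul 1 (fpd 0 f) - fxmul 3 (fpd 2 f)"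
  "hamvf piNS f {2} = fxmul 3 (fpd 1 f) - fxmul 1 (fpd 3 f)"
  "hamvf piNS f {3} = fxmul 3 (fpd 0 f) + fxmul 1 (fpd 2 f)"
  unfolding hamvf_def sum_UNIV_4 bicomp_eq
  by (simp_all add: less_4 not_less_4 piNS_components fmul_zero_left fmul_uminus_left fmul_fvar
      fun_eq_iff)

text \<open>The divergence of X_f is 2 \<partial>f/\<partial>x_0: all second derivatives cancel, and only the
  commutators [\<partial>/\<partial>x_1, x_1] and [\<partial>/\<partial>x_3, x_3] from the \<partial>_0 components survive.\<close>
lemma modular_vector_field: "fdiv (hamvf piNS f) = vapply (mvscale 2 (ebasis {0})) f"
proof
  fix m
  have "fdiv (hamvf piNS f) m = (fpd 0 (hamvf piNS f {0}) + fpd 1 (hamvf piNS f {1})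
      + fpd 2 (hamvf piNS f {2}) + fpd 3 (hamvf piNS f {3})) m"
    unfolding fdiv_def sum_UNIV_4 by simp
  also have "\<dots> = (fpd 0 f + fpd 0 f) m"
    unfolding hamvf_piNS
    by (simp add: fpd_linear fxmul_linear fpd_fxmul distinct_4 fpd_commute[of 1 0] fpd_commute[of 2 0]
        fpd_commute[of 3 0] fpd_commute[of 2 1] fpd_commute[of 3 1] fpd_commute[of 3 2])
  also have "\<dots> = vapply (mvscale 2 (ebasis {0})) f m"
    unfolding vapply_def sum_UNIV_4
    by (simp add: mvscale_def ebasis_def fmul_scale_left fmul_fconst fmul_zero_left distinct_4)
  finally show "fdiv (hamvf piNS f) m = vapply (mvscale 2 (ebasis {0})) f m" .
qed

theorem proposition4p3:
  shows
    \<comment> \<open>H^0 = R<1>\<close>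
    "(\<forall>f. dpi (fn0 f) = mvzero \<longleftrightarrow> (\<exists>c. f = fconst c))
   \<comment> \<open>H^1 = <[d0],[d2]>\<close>
   \<and> dpi (ebasis {0}) = mvzero \<and> dpi (ebasis {2}) = mvzero
   \<and> (\<forall>X. is_kvec 1 X \<and> dpi X = mvzero \<longrightarrow>
        (\<exists>a b f. X = mvadd (mvadd (mvscale a (ebasis {0})) (mvscale b (ebasis {2}))) (dpi (fn0 f))))
   \<and> (\<forall>a b f. mvadd (mvscale a (ebasis {0})) (mvscale b (ebasis {2})) = dpi (fn0 f)
        \<longrightarrow> a = 0 \<and> b = 0)
   \<comment> \<open>H^2 = <[d0 wedge d2]>\<close>
   \<and> dpi (ebasis {0, 2}) = mvzero
   \<and> (\<forall>Z. is_kvec 2 Z \<and> dpi Z = mvzero \<longrightarrow>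
        (\<exists>a Y. is_kvec 1 Y \<and> Z = mvadd (mvscale a (ebasis {0, 2})) (dpi Y)))
   \<and> (\<forall>a Y. is_kvec 1 Y \<and> mvscale a (ebasis {0, 2}) = dpi Y \<longrightarrow> a = 0)
   \<comment> \<open>H^3 = 0\<close>
   \<and> (\<forall>Z. is_kvec 3 Z \<and> dpi Z = mvzero \<longrightarrow> (\<exists>W. is_kvec 2 W \<and> Z = dpi W))
   \<comment> \<open>H^4 = 0\<close>
   \<and> (\<forall>Z. is_kvec 4 Z \<and> dpi Z = mvzero \<longrightarrow> (\<exists>W. is_kvec 3 W \<and> Z = dpi W))
   \<comment> \<open>modular vector field w.r.t. dx0 dx1 dx2 dx3 is 2 d0\<close>
   \<and> (\<forall>f. fdiv (hamvf piNS f) = vapply (mvscale 2 (ebasis {0})) f)"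
proof -
  have "dpi (ebasis {0}) = 0" "dpi (ebasis {2}) = 0" "dpi (ebasis {0, 2}) = 0"
    by (simp_all add: dpi_ebasis distinct_4)
  moreover have "is_kvec 3 Z \<Longrightarrow> dpi Z = 0 \<Longrightarrow> \<exists>W. is_kvec 2 W \<and> Z = dpi W"
    and "is_kvec 4 Z \<Longrightarrow> dpi Z = 0 \<Longrightarrow> \<exists>W. is_kvec 3 W \<and> Z = dpi W" for Z
    using cocycle_ge_3_exact[of 3 Z] cocycle_ge_3_exact[of 4 Z] by simp_all
  ultimately show ?thesis
    unfolding mvzero_eq_0 mvadd_eq_plus
    using dpi_fn0_eq_0_iff cocycle_1_cohomologous harmonic_1_not_exact
      cocycle_2_cohomologous harmonic_2_not_exact modular_vector_field
    by blast
qed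

end
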